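(* For $1\le i\le k$ let $G_i$ be an $r_i$-regular graph with $n_i$ vertices that admits a balanced labelling. Suppose $r_i\le n_j$ for all $1\le i,j\le k$, and that $r=\sum_{i=1}^k r_i$ is coprime to $n_1n_2\cdots n_k$. Then $G_1\Box\cdots\Box G_k$ is $\mathbb{Z}_{n_1\cdots n_k}$-distance antimagic.
   Context: For an $r$-regular graph $G$ with $n$ vertices, a balanced labelling is a bijection $f:V(G)\to\mathbb{Z}_n$ such that $\sum_{y\in N(x)} f(y)\equiv r f(x)\pmod n$ for every vertex $x$ ($N(x)$ the open neighbourhood). The Cartesian product $G_1\Box\cdots\Box G_k$ has vertex set $V(G_1)\times\cdots\times V(G_k)$, with two tuples adjacent iff they differ in exactly one coordinate $i$ and are adjacent there in $G_i$. For a graph $G$ with $n$ vertices, a $\mathbb{Z}_n$-distance antimagic labelling is a bijection $f:V(G)\to\mathbb{Z}_n$ such that the weights $w_f(x)=\sum_{y\in N(x)} f(y)$ (mod $n$) are pairwise distinct; $G$ is $\mathbb{Z}_n$-distance antimagic if such a labelling exists. *)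

theory Defs
  imports Main "HOL-Library.FuncSet"
begin

definition simple_graph :: "'a set \<Rightarrow> ('a \<Rightarrow> 'a \<Rightarrow> bool) \<Rightarrow> bool" where
  "simple_graph V E \<longleftrightarrow> finite V \<and> V \<noteq> {} \<and>
     (\<forall>x y. E x y \<longrightarrow> x \<in> V \<and> y \<in> V) \<and>
     (\<forall>x y. E x y \<longrightarrow> E y x) \<and> (\<forall>x. \<not> E x x)"

definition nbhd :: "'a set \<Rightarrow> ('a \<Rightarrow> 'a \<Rightarrow> bool) \<Rightarrow> 'a \<Rightarrow> 'a set" where
  "nbhd V E x = {y \<in> V. E x y}"

definition regular :: "'a set \<Rightarrow> ('a \<Rightarrow> 'a \<Rightarrow> bool) \<Rightarrow> nat \<Rightarrow> bool" where
  "regular V E r \<longleftrightarrow> (\<forall>x\<in>V. card (nbhd V E x) = r)"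

(* Elements of Z_n are represented by {0..<n}; congruences mod n. *)
definition balanced_labelling ::
  "'a set \<Rightarrow> ('a \<Rightarrow> 'a \<Rightarrow> bool) \<Rightarrow> nat \<Rightarrow> ('a \<Rightarrow> nat) \<Rightarrow> bool" where
  "balanced_labelling V E r f \<longleftrightarrow> bij_betw f V {0..<card V} \<and>
     (\<forall>x\<in>V. (\<Sum>y\<in>nbhd V E x. f y) mod card V = (r * f x) mod card V)"

definition has_balanced_labelling :: "'a set \<Rightarrow> ('a \<Rightarrow> 'a \<Rightarrow> bool) \<Rightarrow> nat \<Rightarrow> bool" where
  "has_balanced_labelling V E r \<longleftrightarrow> (\<exists>f. balanced_labelling V E r f)"

definition distance_antimagic_labelling ::
  "'a set \<Rightarrow> ('a \<Rightarrow> 'a \<Rightarrow> bool) \<Rightarrow> ('a \<Rightarrow> nat) \<Rightarrow> bool" where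
  "distance_antimagic_labelling V E f \<longleftrightarrow> bij_betw f V {0..<card V} \<and>
     inj_on (\<lambda>x. (\<Sum>y\<in>nbhd V E x. f y) mod card V) V"

definition Zn_distance_antimagic :: "'a set \<Rightarrow> ('a \<Rightarrow> 'a \<Rightarrow> bool) \<Rightarrow> bool" where
  "Zn_distance_antimagic V E \<longleftrightarrow> (\<exists>f. distance_antimagic_labelling V E f)"

definition cart_prod_V :: "nat \<Rightarrow> (nat \<Rightarrow> 'a set) \<Rightarrow> (nat \<Rightarrow> 'a) set" where
  "cart_prod_V k V = PiE {..<k} V"

definition cart_prod_E ::
  "nat \<Rightarrow> (nat \<Rightarrow> 'a \<Rightarrow> 'a \<Rightarrow> bool) \<Rightarrow> (nat \<Rightarrow> 'a) \<Rightarrow> (nat \<Rightarrow> 'a) \<Rightarrow> bool" where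
  "cart_prod_E k E x y \<longleftrightarrow> (\<exists>i<k. E i (x i) (y i) \<and> (\<forall>j. j \<noteq> i \<longrightarrow> x j = y j))"

end

theory Submission
  imports Defs
begin

text \<open>Write \<open>n\<^sub>i = |V\<^sub>i|\<close>, \<open>N = n\<^sub>0\<cdots>n\<^sub>k\<^sub>-\<^sub>1\<close>, \<open>M\<^sub>i = n\<^sub>0\<cdots>n\<^sub>i\<^sub>-\<^sub>1\<close> and \<open>R = r\<^sub>0 + \<dots> + r\<^sub>k\<^sub>-\<^sub>1\<close>.
  Label the product by reading the balanced labels as mixed-radix digits,
  \<open>F x = \<Sum>\<^sub>i M\<^sub>i f\<^sub>i(x\<^sub>i)\<close>; this is a bijection onto \<open>{0..<N}\<close>. Moving one coordinate of
  \<open>x\<close> along an edge of \<open>G\<^sub>i\<close> only changes the \<open>i\<close>-th digit, so the weight of \<open>x\<close> is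
  \<open>\<Sum>\<^sub>i M\<^sub>i h\<^sub>i(x\<^sub>i)\<close> with \<open>h\<^sub>i(v) = w\<^sub>i(v) + (R - r\<^sub>i) f\<^sub>i(v)\<close>, and balancedness gives
  \<open>h\<^sub>i(v) \<equiv> R f\<^sub>i(v) (mod n\<^sub>i)\<close>. As \<open>R\<close> is a unit mod every \<open>n\<^sub>i\<close>, each digit \<open>h\<^sub>i(v)\<close> mod \<open>n\<^sub>i\<close>
  determines \<open>v\<close>, and peeling off digits from the lowest one shows that the weight
  mod \<open>N\<close> determines \<open>x\<close>.\<close>

definition weight :: "'a set \<Rightarrow> ('a \<Rightarrow> 'a \<Rightarrow> bool) \<Rightarrow> ('a \<Rightarrow> nat) \<Rightarrow> 'a \<Rightarrow> nat" where
  "weight V E f x = (\<Sum>y\<in>nbhd V E x. f y)"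

lemma mixed_radix_digits_eq:
  fixes n :: "nat \<Rightarrow> nat" and a b :: "nat \<Rightarrow> int"
  assumes "\<And>i. i < K \<Longrightarrow> 0 < n i"
    and "\<And>i. i < K \<Longrightarrow> int (n i) dvd a i - b i \<Longrightarrow> a i = b i"
    and "int (\<Prod>j<K. n j) dvd (\<Sum>i<K. int (\<Prod>j<i. n j) * (a i - b i))"
  shows "\<forall>i<K. a i = b i"
  using assms
proof (induction K)
  case 0
  then show ?case by simp
next
  case (Suc K)
  define M where "M = int (\<Prod>j<K. n j)"
  define D where "D = (\<Sum>i<K. int (\<Prod>j<i. n j) * (a i - b i))"
  have M_pos: "M > 0"
    using Suc.prems(1) unfolding M_def of_nat_0_less_iff by (auto intro!: prod_pos)
  have total: "M * int (n K) dvd D + M * (a K - b K)"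
    using Suc.prems(3) by (simp add: M_def D_def algebra_simps)
  then have "M dvd D + M * (a K - b K)"
    by (rule dvd_mult_left)
  then have "M dvd D"
    by (simp add: dvd_add_left_iff)
  with Suc.prems(1,2) have lower: "\<forall>i<K. a i = b i"
    unfolding M_def D_def by (intro Suc.IH) auto
  then have "D = 0"
    by (simp add: D_def)
  then have "int (n K) dvd a K - b K"
    using total M_pos by simp
  then show ?case
    using lower Suc.prems(2) less_Suc_eq by auto
qed

lemma inj_on_mixed_radix:
  fixes n :: "nat \<Rightarrow> nat" and h :: "nat \<Rightarrow> 'a \<Rightarrow> int"
  assumes pos: "\<And>i. i < k \<Longrightarrow> 0 < n i"
    and digit: "\<And>i u v. i < k \<Longrightarrow> u \<in> A i \<Longrightarrow> v \<in> A i \<Longrightarrow> int (n i) dvd h i u - h i v \<Longrightarrow> u = v"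
  shows "inj_on (\<lambda>x. (\<Sum>i<k. int (\<Prod>j<i. n j) * h i (x i)) mod int (\<Prod>j<k. n j)) (PiE {..<k} A)"
proof (rule inj_onI)
  fix x y
  assume x: "x \<in> PiE {..<k} A" and y: "y \<in> PiE {..<k} A"
    and eq: "(\<Sum>i<k. int (\<Prod>j<i. n j) * h i (x i)) mod int (\<Prod>j<k. n j) =
             (\<Sum>i<k. int (\<Prod>j<i. n j) * h i (y i)) mod int (\<Prod>j<k. n j)"
  have total: "int (\<Prod>j<k. n j) dvd (\<Sum>i<k. int (\<Prod>j<i. n j) * (h i (x i) - h i (y i)))"
    using eq by (simp add: mod_eq_dvd_iff sum_subtractf right_diff_distrib)
  have digit_eq: "h i (x i) = h i (y i)" if "i < k" "int (n i) dvd h i (x i) - h i (y i)" for i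
    using digit[OF that(1) _ _ that(2)] x y that(1) by (auto simp: PiE_iff)
  have "\<forall>i<k. h i (x i) = h i (y i)"
    by (rule mixed_radix_digits_eq[OF pos digit_eq total])
  then have "\<forall>i<k. x i = y i"
    using digit x y by (auto simp: PiE_iff)
  then show "x = y"
    using x y by (auto intro: PiE_ext)
qed

lemma mixed_radix_less:
  fixes n a :: "nat \<Rightarrow> nat"
  assumes "\<And>i. i < K \<Longrightarrow> a i < n i"
  shows "(\<Sum>i<K. (\<Prod>j<i. n j) * a i) < (\<Prod>j<K. n j)"
  using assms
proof (induction K)
  case 0
  then show ?case by simp
next
  case (Suc K)
  have "(\<Sum>i<K. (\<Prod>j<i. n j) * a i) < (\<Prod>j<K. n j)"
    using Suc by simp
  moreover have "(\<Prod>j<K. n j) * (a K + 1) \<le> (\<Prod>j<K. n j) * n K"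
    using Suc.prems[of K] by (intro mult_left_mono) auto
  ultimately show ?case
    by (simp add: algebra_simps)
qed

lemma labelling_dvd_imp_eq:
  assumes "bij_betw f V {0..<n}" "u \<in> V" "v \<in> V" "int n dvd int (f u) - int (f v)"
  shows "u = v"
proof -
  have "f u < n" "f v < n"
    using assms(1-3) bij_betwE by fastforce+
  with assms(4) have "f u = f v"
    by (metis mod_eq_dvd_iff mod_less of_nat_eq_iff zmod_int)
  with assms(1-3) show ?thesis
    by (metis bij_betw_imp_inj_on inj_onD)
qed

lemma bij_betw_mixed_radix:
  fixes n :: "nat \<Rightarrow> nat" and f :: "nat \<Rightarrow> 'a \<Rightarrow> nat"
  assumes bij: "\<And>i. i < k \<Longrightarrow> bij_betw (f i) (A i) {0..<n i}"
    and pos: "\<And>i. i < k \<Longrightarrow> 0 < n i"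
  shows "bij_betw (\<lambda>x. \<Sum>i<k. (\<Prod>j<i. n j) * f i (x i)) (PiE {..<k} A) {0..<\<Prod>j<k. n j}"
proof -
  let ?F = "\<lambda>x. \<Sum>i<k. (\<Prod>j<i. n j) * f i (x i)"
  have digit_less: "f i v < n i" if "i < k" "v \<in> A i" for i v
    using bij_betwE[OF bij[OF that(1)]] that(2) by auto
  have less: "?F x < (\<Prod>j<k. n j)" if "x \<in> PiE {..<k} A" for x
    by (rule mixed_radix_less) (use digit_less that in \<open>auto simp: PiE_iff\<close>)
  have "inj_on (\<lambda>x. (\<Sum>i<k. int (\<Prod>j<i. n j) * int (f i (x i))) mod int (\<Prod>j<k. n j))
          (PiE {..<k} A)"
  proof (rule inj_on_mixed_radix[OF pos])
    fix i u v
    assume "i < k" "u \<in> A i" "v \<in> A i" "int (n i) dvd int (f i u) - int (f i v)"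
    then show "u = v"
      by (rule labelling_dvd_imp_eq[OF bij])
  qed
  then have "inj_on ((\<lambda>m. int m mod int (\<Prod>j<k. n j)) \<circ> ?F) (PiE {..<k} A)"
    by (simp add: comp_def)
  then have inj: "inj_on ?F (PiE {..<k} A)"
    by (rule inj_on_imageI2)
  have "?F ` PiE {..<k} A = {0..<\<Prod>j<k. n j}"
  proof (rule card_subset_eq)
    show "?F ` PiE {..<k} A \<subseteq> {0..<\<Prod>j<k. n j}"
      using less by auto
    show "card (?F ` PiE {..<k} A) = card {0..<\<Prod>j<k. n j}"
      using bij_betw_same_card[OF bij] by (auto simp: card_image[OF inj] card_PiE intro!: prod.cong)
  qed simp
  with inj show ?thesis
    by (rule bij_betw_imageI)
qed

lemma nbhd_cart_prod:
  assumes x: "x \<in> cart_prod_V k V"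
  shows "nbhd (cart_prod_V k V) (cart_prod_E k E) x =
         (\<Union>i<k. (\<lambda>v. x(i := v)) ` nbhd (V i) (E i) (x i))"
proof (rule set_eqI, rule iffI)
  fix y
  assume "y \<in> nbhd (cart_prod_V k V) (cart_prod_E k E) x"
  then obtain i where i: "i < k" "E i (x i) (y i)" "\<forall>j. j \<noteq> i \<longrightarrow> x j = y j"
    and y: "y \<in> cart_prod_V k V"
    unfolding nbhd_def cart_prod_E_def by auto
  have "y = x(i := y i)"
    using i by auto
  moreover have "y i \<in> nbhd (V i) (E i) (x i)"
    using i y unfolding nbhd_def cart_prod_V_def by auto
  ultimately show "y \<in> (\<Union>i<k. (\<lambda>v. x(i := v)) ` nbhd (V i) (E i) (x i))"
    using i by blast
next
  fix y
  assume "y \<in> (\<Union>i<k. (\<lambda>v. x(i := v)) ` nbhd (V i) (E i) (x i))"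
  then obtain i v where "i < k" "v \<in> V i" "E i (x i) v" "y = x(i := v)"
    unfolding nbhd_def by auto
  with x show "y \<in> nbhd (cart_prod_V k V) (cart_prod_E k E) x"
    unfolding nbhd_def cart_prod_V_def cart_prod_E_def by (auto simp: PiE_iff extensional_def)
qed

lemma weight_cart_prod:
  assumes graphs: "\<And>i. i < k \<Longrightarrow> simple_graph (V i) (E i)"
    and x: "x \<in> cart_prod_V k V"
  shows "weight (cart_prod_V k V) (cart_prod_E k E) F x =
         (\<Sum>i<k. \<Sum>v\<in>nbhd (V i) (E i) (x i). F (x(i := v)))"
proof -
  have finite: "finite (nbhd (V i) (E i) (x i))" if "i < k" for i
    using graphs[OF that] unfolding simple_graph_def nbhd_def by auto
  have disjoint: "(\<lambda>v. x(i := v)) ` nbhd (V i) (E i) (x i) \<inter> (\<lambda>v. x(j := v)) ` nbhd (V j) (E j) (x j) = {}"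
    if "i < k" "i \<noteq> j" for i j
  proof -
    have "x(i := v) \<noteq> x(j := w)" if "E i (x i) v" for v w
    proof
      assume "x(i := v) = x(j := w)"
      then have "v = x i"
        using \<open>i \<noteq> j\<close> by (metis fun_upd_same fun_upd_other)
      with \<open>E i (x i) v\<close> graphs[OF \<open>i < k\<close>] show False
        unfolding simple_graph_def by simp
    qed
    then show ?thesis
      unfolding nbhd_def by blast
  qed
  have inj: "inj_on (\<lambda>v. x(i := v)) A" for i A
    by (rule inj_onI) (metis fun_upd_same)
  have "weight (cart_prod_V k V) (cart_prod_E k E) F x =
        (\<Sum>i<k. \<Sum>y\<in>(\<lambda>v. x(i := v)) ` nbhd (V i) (E i) (x i). F y)"
    unfolding weight_def nbhd_cart_prod[OF x]
    by (rule sum.UNION_disjoint) (use finite disjoint in auto)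
  also have "\<dots> = (\<Sum>i<k. \<Sum>v\<in>nbhd (V i) (E i) (x i). F (x(i := v)))"
    by (simp add: sum.reindex[OF inj])
  finally show ?thesis .
qed

lemma weight_coordinatewise:
  fixes c :: "nat \<Rightarrow> nat" and g :: "nat \<Rightarrow> 'a \<Rightarrow> nat"
  assumes graphs: "\<And>i. i < k \<Longrightarrow> simple_graph (V i) (E i)"
    and reg: "\<And>i. i < k \<Longrightarrow> regular (V i) (E i) (r i)"
    and x: "x \<in> cart_prod_V k V"
  shows "int (weight (cart_prod_V k V) (cart_prod_E k E) (\<lambda>y. \<Sum>i<k. c i * g i (y i)) x) =
         (\<Sum>i<k. int (c i) * (int (weight (V i) (E i) (g i) (x i))
                               + (int (\<Sum>j<k. r j) - int (r i)) * int (g i (x i))))"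
proof -
  let ?G = "\<lambda>y. \<Sum>i<k. c i * g i (y i)"
  define G where "G = int (?G x)"
  define w where "w i = int (weight (V i) (E i) (g i) (x i))" for i
  have update: "int (?G (x(i := v))) = G + int (c i) * (int (g i v) - int (g i (x i)))"
    if "i < k" for i v
  proof -
    have "int (?G (x(i := v))) - G =
          (\<Sum>j<k. int (c j) * int (g j ((x(i := v)) j)) - int (c j) * int (g j (x j)))"
      by (simp add: G_def sum_subtractf)
    also have "\<dots> = (\<Sum>j<k. if j = i then int (c i) * (int (g i v) - int (g i (x i))) else 0)"
      by (rule sum.cong) (auto simp: algebra_simps)
    finally show ?thesis
      using that by simp
  qed
  have block: "(\<Sum>v\<in>nbhd (V i) (E i) (x i). int (?G (x(i := v)))) =
      int (r i) * G + int (c i) * (w i - int (r i) * int (g i (x i)))"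
    if "i < k" for i
  proof -
    have card: "card (nbhd (V i) (E i) (x i)) = r i"
      using reg[OF that] x that unfolding regular_def cart_prod_V_def by auto
    have "(\<Sum>v\<in>nbhd (V i) (E i) (x i). int (?G (x(i := v)))) =
          (\<Sum>v\<in>nbhd (V i) (E i) (x i). (G - int (c i) * int (g i (x i))) + int (c i) * int (g i v))"
      by (rule sum.cong[OF refl]) (subst update[OF that], simp add: algebra_simps)
    also have "\<dots> = int (card (nbhd (V i) (E i) (x i))) * (G - int (c i) * int (g i (x i)))
                     + int (c i) * w i"
      by (simp add: w_def weight_def sum.distrib sum_distrib_left)
    finally show ?thesis
      using card by (simp add: algebra_simps)
  qed
  have "int (weight (cart_prod_V k V) (cart_prod_E k E) ?G x) =
        (\<Sum>i<k. \<Sum>v\<in>nbhd (V i) (E i) (x i). int (?G (x(i := v))))"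
    by (simp only: weight_cart_prod[OF graphs x] of_nat_sum)
  also have "\<dots> = (\<Sum>i<k. int (r i) * G + int (c i) * (w i - int (r i) * int (g i (x i))))"
    by (rule sum.cong[OF refl], rule block) simp
  also have "\<dots> = int (\<Sum>j<k. r j) * G + (\<Sum>i<k. int (c i) * (w i - int (r i) * int (g i (x i))))"
    by (simp add: sum.distrib sum_distrib_right)
  also have "int (\<Sum>j<k. r j) * G = (\<Sum>i<k. int (c i) * (int (\<Sum>j<k. r j) * int (g i (x i))))"
    by (simp add: G_def sum_distrib_left algebra_simps)
  also have "\<dots> + (\<Sum>i<k. int (c i) * (w i - int (r i) * int (g i (x i)))) =
             (\<Sum>i<k. int (c i) * (w i + (int (\<Sum>j<k. r j) - int (r i)) * int (g i (x i))))"
    by (simp add: sum.distrib[symmetric] algebra_simps)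
  finally show ?thesis
    unfolding w_def .
qed

lemma balanced_digit_eq:
  fixes R :: nat
  assumes bal: "balanced_labelling V E r f" and cop: "coprime R (card V)"
    and uv: "u \<in> V" "v \<in> V"
    and dvd: "int (card V) dvd (int (weight V E f u) + (int R - int r) * int (f u))
                              - (int (weight V E f v) + (int R - int r) * int (f v))"
  shows "u = v"
proof -
  have cong: "int (card V) dvd int (weight V E f w) - int r * int (f w)" if "w \<in> V" for w
    using bal that unfolding balanced_labelling_def weight_def
    by (metis mod_eq_dvd_iff of_nat_mod of_nat_mult)
  have "int (card V) dvd int R * (int (f u) - int (f v))"
    using dvd_diff[OF dvd dvd_diff[OF cong[OF uv(1)] cong[OF uv(2)]]]
    by (simp add: algebra_simps)
  then have dvd_labels: "int (card V) dvd int (f u) - int (f v)"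
    using cop by (simp add: coprime_commute coprime_dvd_mult_right_iff)
  have "bij_betw f V {0..<card V}"
    using bal unfolding balanced_labelling_def by blast
  from this uv dvd_labels show ?thesis
    by (rule labelling_dvd_imp_eq)
qed

lemma inj_on_weight_mixed_radix:
  assumes graphs: "\<And>i. i < k \<Longrightarrow> simple_graph (V i) (E i)"
    and reg: "\<And>i. i < k \<Longrightarrow> regular (V i) (E i) (r i)"
    and bal: "\<And>i. i < k \<Longrightarrow> balanced_labelling (V i) (E i) (r i) (f i)"
    and cop: "\<And>i. i < k \<Longrightarrow> coprime (\<Sum>j<k. r j) (card (V i))"
  shows "inj_on (\<lambda>x. weight (cart_prod_V k V) (cart_prod_E k E)
                    (\<lambda>y. \<Sum>i<k. (\<Prod>j<i. card (V j)) * f i (y i)) x mod card (cart_prod_V k V))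
                (cart_prod_V k V)"
    (is "inj_on (\<lambda>x. ?W x mod card ?P) ?P")
proof -
  let ?R = "\<Sum>j<k. r j"
  let ?h = "\<lambda>i v. int (weight (V i) (E i) (f i) v) + (int ?R - int (r i)) * int (f i v)"
  have pos: "0 < card (V i)" if "i < k" for i
    using graphs[OF that] unfolding simple_graph_def by (simp add: card_gt_0_iff)
  have card_P: "card ?P = (\<Prod>j<k. card (V j))"
    by (simp add: cart_prod_V_def card_PiE)
  have "inj_on (\<lambda>x. (\<Sum>i<k. int (\<Prod>j<i. card (V j)) * ?h i (x i)) mod int (\<Prod>j<k. card (V j))) ?P"
    unfolding cart_prod_V_def
  proof (rule inj_on_mixed_radix[OF pos])
    fix i u v
    assume i: "i < k" and uv: "u \<in> V i" "v \<in> V i" and digits: "int (card (V i)) dvd ?h i u - ?h i v"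
    show "u = v"
      by (rule balanced_digit_eq[OF bal[OF i] cop[OF i] uv digits])
  qed
  moreover have "int (?W x) = (\<Sum>i<k. int (\<Prod>j<i. card (V j)) * ?h i (x i))" if "x \<in> ?P" for x
    by (rule weight_coordinatewise[OF graphs reg that])
  ultimately have "inj_on (\<lambda>x. int (?W x) mod int (card ?P)) ?P"
    unfolding card_P by (simp cong: inj_on_cong)
  then have "inj_on (int \<circ> (\<lambda>x. ?W x mod card ?P)) ?P"
    by (simp add: comp_def zmod_int)
  then show ?thesis
    by (rule inj_on_imageI2)
qed

theorem mainTheorem12:
  fixes k :: nat and V :: "nat \<Rightarrow> 'a set" and E :: "nat \<Rightarrow> 'a \<Rightarrow> 'a \<Rightarrow> bool"
    and r :: "nat \<Rightarrow> nat"
  assumes "k \<ge> 1"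
    and graphs: "\<And>i. i < k \<Longrightarrow> simple_graph (V i) (E i)"
    and reg: "\<And>i. i < k \<Longrightarrow> regular (V i) (E i) (r i)"
    and bal: "\<And>i. i < k \<Longrightarrow> has_balanced_labelling (V i) (E i) (r i)"
    and le: "\<And>i j. i < k \<Longrightarrow> j < k \<Longrightarrow> r i \<le> card (V j)"
    and cop: "coprime (\<Sum>i<k. r i) (\<Prod>i<k. card (V i))"
  shows "Zn_distance_antimagic (cart_prod_V k V) (cart_prod_E k E)"
proof -
  obtain f where f: "\<And>i. i < k \<Longrightarrow> balanced_labelling (V i) (E i) (r i) (f i)"
    using bal unfolding has_balanced_labelling_def by metis
  define F where "F x = (\<Sum>i<k. (\<Prod>j<i. card (V j)) * f i (x i))" for x
  have pos: "0 < card (V i)" if "i < k" for i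
    using graphs[OF that] unfolding simple_graph_def by (simp add: card_gt_0_iff)
  have f_bij: "bij_betw (f i) (V i) {0..<card (V i)}" if "i < k" for i
    using f[OF that] unfolding balanced_labelling_def by blast
  have cop_factor: "coprime (\<Sum>j<k. r j) (card (V i))" if "i < k" for i
    by (rule coprime_divisors[OF dvd_refl _ cop]) (use that in \<open>auto intro: dvd_prodI\<close>)
  have "bij_betw F (cart_prod_V k V) {0..<card (cart_prod_V k V)}"
    using bij_betw_mixed_radix[OF f_bij pos]
    unfolding F_def by (simp add: cart_prod_V_def card_PiE)
  moreover have "inj_on (\<lambda>x. weight (cart_prod_V k V) (cart_prod_E k E) F x mod card (cart_prod_V k V))
                        (cart_prod_V k V)"
    unfolding F_def by (rule inj_on_weight_mixed_radix[OF graphs reg f cop_factor])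
  ultimately show ?thesis
    unfolding Zn_distance_antimagic_def distance_antimagic_labelling_def weight_def by blast
qed

end
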